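(* Let $\mathbf{x}_1,\dots,\mathbf{x}_n$ be i.i.d. $N_p(\mathbf{0},\boldsymbol{\Sigma})$, where all diagonal entries of $\boldsymbol{\Sigma}$ equal $1$, $p=p_n\to\infty$ and $\log p=o(n)$. Write $\mathbf{x}_k=(x_{k1},\dots,x_{kp})^T$ and set, for $1\le i\le p$, $$L_i=-n+\sum_{k=1}^n x_{ki}^2,\qquad \epsilon_{n,i}=\Big(1+\frac{L_i}{n}\Big)^{-1/2}-1+\frac{L_i}{2n},$$ and for $i\ne j$ $$E_{ij}=\frac{L_iL_j}{4n^2}-\frac{L_i\epsilon_{n,j}}{2n}-\frac{L_j\epsilon_{n,i}}{2n}+\epsilon_{n,i}\epsilon_{n,j}+\epsilon_{n,i}+\epsilon_{n,j}.$$ Then $$\max_{1\le i<j\le p}\Big\{|E_{ij}|\cdot\Big|\frac1{\sqrt n}\sum_{k=1}^n x_{ki}x_{kj}\Big|\Big\}=O_{\mathbb P}\Big(\frac{\log p}{\sqrt n}\Big).$$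
   Context: $\xi_n=O_{\mathbb P}(a_n)$ means $\lim_{C\to\infty}\limsup_{n\to\infty}\mathbb P(|\xi_n/a_n|>C)=0$. *)

theory Defs
  imports "HOL-Probability.Probability"
begin

definition centered_normal :: "real \<Rightarrow> real measure" where
  "centered_normal v = (if v > 0 then density lborel (normal_density 0 (sqrt v)) else return lborel 0)"

definition gaussian_vector :: "'a measure \<Rightarrow> nat set \<Rightarrow> (nat \<Rightarrow> 'a \<Rightarrow> real) \<Rightarrow> (nat \<Rightarrow> nat \<Rightarrow> real) \<Rightarrow> bool" where
  "gaussian_vector M I X S \<longleftrightarrow>
     (\<forall>i\<in>I. X i \<in> borel_measurable M) \<and>
     (\<forall>a :: nat \<Rightarrow> real. distr M lborel (\<lambda>\<omega>. \<Sum>i\<in>I. a i * X i \<omega>) =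
        centered_normal (\<Sum>i\<in>I. \<Sum>j\<in>I. a i * a j * S i j))"

definition bigOP :: "(nat \<Rightarrow> 'a measure) \<Rightarrow> (nat \<Rightarrow> 'a \<Rightarrow> real) \<Rightarrow> (nat \<Rightarrow> real) \<Rightarrow> bool" where
  "bigOP M \<xi> a \<longleftrightarrow>
     ((\<lambda>C::real. limsup (\<lambda>n. ereal (measure (M n) {\<omega> \<in> space (M n). \<bar>\<xi> n \<omega> / a n\<bar> > C})))
        \<longlongrightarrow> 0) at_top"

definition Lstat :: "nat \<Rightarrow> (nat \<Rightarrow> nat \<Rightarrow> real) \<Rightarrow> nat \<Rightarrow> real" where
  "Lstat n x i = - real n + (\<Sum>k=1..n. (x k i)\<^sup>2)"

definition epsn :: "nat \<Rightarrow> (nat \<Rightarrow> nat \<Rightarrow> real) \<Rightarrow> nat \<Rightarrow> real" where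
  "epsn n x i = (1 + Lstat n x i / real n) powr (-1/2) - 1 + Lstat n x i / (2 * real n)"

definition Estat :: "nat \<Rightarrow> (nat \<Rightarrow> nat \<Rightarrow> real) \<Rightarrow> nat \<Rightarrow> nat \<Rightarrow> real" where
  "Estat n x i j =
     Lstat n x i * Lstat n x j / (4 * (real n)\<^sup>2)
     - Lstat n x i * epsn n x j / (2 * real n)
     - Lstat n x j * epsn n x i / (2 * real n)
     + epsn n x i * epsn n x j + epsn n x i + epsn n x j"

end

theory Submission
  imports Defs
begin

text \<open>Write \<open>t\<^sub>i = L\<^sub>i / n\<close> and \<open>w = \<surd>((1 + t\<^sub>i)(1 + t\<^sub>j))\<close>. A direct computation gives
  \<open>E\<^sub>i\<^sub>j = 1/w - 1 + (t\<^sub>i + t\<^sub>j)/2\<close>, so \<open>E\<^sub>i\<^sub>j w = 1 - w + (t\<^sub>i + t\<^sub>j) w / 2\<close> is a second order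
  remainder of the square root, and \<open>|E\<^sub>i\<^sub>j| w \<le> 7 d\<^sup>2\<close> as soon as \<open>|t\<^sub>i|, |t\<^sub>j| \<le> d \<le> 1/2\<close>.
  By Cauchy-Schwarz \<open>|\<Sum>\<^sub>k x\<^sub>k\<^sub>i x\<^sub>k\<^sub>j| \<le> n w\<close>, so every term of the maximum is then at most
  \<open>7 d\<^sup>2 \<surd>n\<close>. Each \<open>L\<^sub>i\<close> is a centred chi-square variable with \<open>n\<close> degrees of freedom, and a
  Chernoff bound gives \<open>P(|L\<^sub>i| \<ge> d n) \<le> 2 exp (-d\<^sup>2 n / 16)\<close>. Choosing \<open>7 d\<^sup>2 = C ln p / n\<close>
  with \<open>C \<ge> 224\<close> and a union bound over the \<open>p\<close> coordinates, the maximum exceeds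
  \<open>C ln p / \<surd>n\<close> with probability at most \<open>2 / p \<rightarrow> 0\<close>.\<close>

section \<open>Chernoff bound for chi-square variables\<close>

lemma exp_neg_div_sqrt_le_exp_sq:
  fixes l :: real assumes l: "\<bar>l\<bar> \<le> 1/4"
  shows "exp (-l) / sqrt (1 - 2*l) \<le> exp (4 * l\<^sup>2)"
proof -
  have pos: "0 < 1 - 2*l" using l by auto
  have "-2*l - 8*l\<^sup>2 \<le> ln (1 - 2*l)"
  proof (cases "l \<ge> 0")
    case True
    with ln_one_minus_pos_lower_bound[of "2*l"] l show ?thesis
      by (simp add: power2_eq_square)
  next
    case False
    with ln_one_plus_pos_lower_bound[of "-2*l"] l have "-2*l - 4*l\<^sup>2 \<le> ln (1 - 2*l)"
      by (simp add: power2_eq_square)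
    thus ?thesis using zero_le_power2[of l] by linarith
  qed
  hence exp_le: "exp (-2*l - 8*l\<^sup>2) \<le> 1 - 2*l"
    using pos by (metis exp_le_cancel_iff exp_ln)
  have "exp (-l - 4*l\<^sup>2) = sqrt (exp (-2*l - 8*l\<^sup>2))"
    by (rule real_sqrt_unique[symmetric]) (simp_all add: power2_eq_square flip: exp_add)
  also have "\<dots> \<le> sqrt (1 - 2*l)" using exp_le by (rule real_sqrt_le_mono)
  finally have "exp (-l) \<le> exp (4 * l\<^sup>2) * sqrt (1 - 2*l)"
    by (simp add: exp_diff field_simps)
  thus ?thesis using pos by (simp add: divide_le_eq mult.commute)
qed

text \<open>Completing the square: the density of \<open>N(0,1)\<close> times \<open>exp (l (x\<^sup>2 - 1))\<close> is
  \<open>exp (-l) \<sigma>\<close> times the density of \<open>N(0,\<sigma>\<^sup>2)\<close> with \<open>\<sigma>\<^sup>2 = 1 / (1 - 2 l)\<close>.\<close>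
lemma nn_integral_std_normal_exp_sq:
  fixes l :: real assumes "l < 1/2"
  shows "(\<integral>\<^sup>+x. exp (l * (x\<^sup>2 - 1)) \<partial>std_normal_distribution)
       = ennreal (exp (-l) / sqrt (1 - 2*l))"
proof -
  define \<sigma> where "\<sigma> = 1 / sqrt (1 - 2*l)"
  have pos: "0 < 1 - 2*l" using assms by auto
  have \<sigma>: "\<sigma> > 0" using pos by (simp add: \<sigma>_def)
  have "std_normal_density x * exp (l * (x\<^sup>2 - 1)) = exp (-l) * \<sigma> * normal_density 0 \<sigma> x" for x
  proof -
    have "sqrt (2*pi*\<sigma>\<^sup>2) = sqrt (2*pi) * \<sigma>" using \<sigma> by (simp add: real_sqrt_mult)
    moreover have "- x\<^sup>2 / (2 * \<sigma>\<^sup>2) = -x\<^sup>2/2 + l * x\<^sup>2"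
      using pos by (simp add: \<sigma>_def power_divide field_simps)
    ultimately show ?thesis
      unfolding normal_density_def using \<sigma>
      by (simp add: exp_add[symmetric] exp_diff field_simps)
  qed
  hence "(\<integral>\<^sup>+x. exp (l * (x\<^sup>2 - 1)) \<partial>std_normal_distribution)
      = (\<integral>\<^sup>+x. ennreal (exp (-l) * \<sigma>) * normal_density 0 \<sigma> x \<partial>lborel)"
    using \<sigma> by (subst nn_integral_density) (auto intro!: nn_integral_cong simp flip: ennreal_mult)
  also have "\<dots> = ennreal (exp (-l) * \<sigma>) * (\<integral>\<^sup>+x. normal_density 0 \<sigma> x \<partial>lborel)"
    by (rule nn_integral_cmult) auto
  also have "(\<integral>\<^sup>+x. normal_density 0 \<sigma> x \<partial>lborel) = 1"
    using \<sigma> by (subst nn_integral_eq_integral) simp_all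
  finally show ?thesis by (simp add: \<sigma>_def)
qed

lemma (in prob_space) nn_integral_exp_chi_square_le:
  assumes fin: "finite K" and ind: "indep_vars (\<lambda>_. borel) z K"
    and std: "\<And>k. k \<in> K \<Longrightarrow> distr M lborel (z k) = std_normal_distribution"
    and l: "\<bar>l\<bar> \<le> 1/4"
  shows "(\<integral>\<^sup>+\<omega>. exp (l * (\<Sum>k\<in>K. (z k \<omega>)\<^sup>2 - 1)) \<partial>M) \<le> exp (4 * l\<^sup>2 * card K)"
proof -
  have "(\<integral>\<^sup>+\<omega>. exp (l * (\<Sum>k\<in>K. (z k \<omega>)\<^sup>2 - 1)) \<partial>M)
      = (\<integral>\<^sup>+\<omega>. (\<Prod>k\<in>K. ennreal (exp (l * ((z k \<omega>)\<^sup>2 - 1)))) \<partial>M)"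
    by (intro nn_integral_cong) (simp add: sum_distrib_left exp_sum fin prod_ennreal)
  also have "\<dots> = (\<Prod>k\<in>K. \<integral>\<^sup>+\<omega>. exp (l * ((z k \<omega>)\<^sup>2 - 1)) \<partial>M)"
    by (intro indep_vars_nn_integral fin indep_vars_compose2[OF ind]) auto
  also have "\<dots> \<le> (\<Prod>k\<in>K. ennreal (exp (4 * l\<^sup>2)))"
  proof (intro prod_mono_ennreal)
    fix k assume k: "k \<in> K"
    have "z k \<in> measurable M lborel" using ind k by (simp add: indep_vars_def)
    hence "(\<integral>\<^sup>+\<omega>. exp (l * ((z k \<omega>)\<^sup>2 - 1)) \<partial>M)
        = (\<integral>\<^sup>+x. exp (l * (x\<^sup>2 - 1)) \<partial>distr M lborel (z k))"
      by (subst nn_integral_distr) auto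
    also have "\<dots> = ennreal (exp (-l) / sqrt (1 - 2*l))"
      using std[OF k] nn_integral_std_normal_exp_sq[of l] l by simp
    also have "\<dots> \<le> exp (4 * l\<^sup>2)"
      using exp_neg_div_sqrt_le_exp_sq[OF l] by (simp add: ennreal_leI)
    finally show "(\<integral>\<^sup>+\<omega>. exp (l * ((z k \<omega>)\<^sup>2 - 1)) \<partial>M) \<le> exp (4 * l\<^sup>2)" .
  qed
  also have "\<dots> = exp (4 * l\<^sup>2 * card K)"
    by (simp add: ennreal_power exp_of_nat_mult[symmetric] mult.commute)
  finally show ?thesis .
qed

lemma (in prob_space) chi_square_signed_tail_le:
  assumes fin: "finite K" and ind: "indep_vars (\<lambda>_. borel) z K"
    and std: "\<And>k. k \<in> K \<Longrightarrow> distr M lborel (z k) = std_normal_distribution"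
    and s: "0 < s" "s \<le> real (card K)" and g: "\<bar>g\<bar> = 1"
  shows "emeasure M {\<omega>\<in>space M. s \<le> g * (\<Sum>k\<in>K. (z k \<omega>)\<^sup>2 - 1)} \<le> exp (-s\<^sup>2 / (16 * real (card K)))"
proof -
  define n where "n = real (card K)"
  have n: "n > 0" using s by (simp add: n_def)
  define l where "l = s / (8 * n)"
  have l: "l > 0" using s n by (simp add: l_def)
  have gl: "\<bar>g * l\<bar> \<le> 1/4" using s n g l by (simp add: l_def abs_mult field_simps n_def)
  have [measurable]: "z k \<in> borel_measurable M" if "k \<in> K" for k
    using ind that by (simp add: indep_vars_def)
  have "emeasure M {\<omega>\<in>space M. s \<le> g * (\<Sum>k\<in>K. (z k \<omega>)\<^sup>2 - 1)}
     \<le> exp (-l * s) * (\<integral>\<^sup>+\<omega>. ennreal (exp (l * (g * (\<Sum>k\<in>K. (z k \<omega>)\<^sup>2 - 1)))) * indicator (space M) \<omega> \<partial>M)"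
    by (rule Chernoff_ineq_nn_integral_ge[OF l]) measurable
  also have "(\<integral>\<^sup>+\<omega>. ennreal (exp (l * (g * (\<Sum>k\<in>K. (z k \<omega>)\<^sup>2 - 1)))) * indicator (space M) \<omega> \<partial>M)
      = (\<integral>\<^sup>+\<omega>. exp ((g * l) * (\<Sum>k\<in>K. (z k \<omega>)\<^sup>2 - 1)) \<partial>M)"
    by (intro nn_integral_cong) (simp add: mult_ac)
  also have "ennreal (exp (-l * s)) * \<dots> \<le> ennreal (exp (-l * s)) * ennreal (exp (4 * (g * l)\<^sup>2 * n))"
    unfolding n_def by (rule mult_left_mono[OF nn_integral_exp_chi_square_le[OF fin ind std gl]]) auto
  also have "\<dots> = exp (-s\<^sup>2 / (16 * n))"
  proof -
    have "(g * l)\<^sup>2 = l\<^sup>2" using power2_abs[of g] g by (simp add: power_mult_distrib)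
    moreover have "-l * s + 4 * l\<^sup>2 * n = -s\<^sup>2 / (16 * n)" using n
      by (simp add: l_def field_simps power2_eq_square)
    ultimately show ?thesis by (simp add: exp_add[symmetric] flip: ennreal_mult)
  qed
  finally show ?thesis unfolding n_def .
qed

lemma (in prob_space) chi_square_tail_le:
  assumes fin: "finite K" and ind: "indep_vars (\<lambda>_. borel) z K"
    and std: "\<And>k. k \<in> K \<Longrightarrow> distr M lborel (z k) = std_normal_distribution"
    and s: "0 < s" "s \<le> real (card K)"
  shows "prob {\<omega>\<in>space M. s \<le> \<bar>\<Sum>k\<in>K. (z k \<omega>)\<^sup>2 - 1\<bar>} \<le> 2 * exp (-s\<^sup>2 / (16 * real (card K)))"
proof -
  have [measurable]: "z k \<in> borel_measurable M" if "k \<in> K" for k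
    using ind that by (simp add: indep_vars_def)
  define A where "A g = {\<omega>\<in>space M. s \<le> g * (\<Sum>k\<in>K. (z k \<omega>)\<^sup>2 - 1)}" for g :: real
  have A_sets: "A g \<in> sets M" for g
    unfolding A_def using fin by measurable
  have A_le: "prob (A g) \<le> exp (-s\<^sup>2 / (16 * real (card K)))" if "\<bar>g\<bar> = 1" for g
    using chi_square_signed_tail_le[OF fin ind std s that]
    by (simp add: A_def emeasure_eq_measure)
  have "{\<omega>\<in>space M. s \<le> \<bar>\<Sum>k\<in>K. (z k \<omega>)\<^sup>2 - 1\<bar>} = A 1 \<union> A (-1)"
  proof -
    have "s \<le> \<bar>y\<bar> \<longleftrightarrow> s \<le> 1 * y \<or> s \<le> (-1) * y" for y :: real by linarith
    thus ?thesis unfolding A_def by blast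
  qed
  hence "prob {\<omega>\<in>space M. s \<le> \<bar>\<Sum>k\<in>K. (z k \<omega>)\<^sup>2 - 1\<bar>} \<le> prob (A 1) + prob (A (-1))"
    using measure_Un_le[OF A_sets A_sets] by simp
  also have "\<dots> \<le> 2 * exp (-s\<^sup>2 / (16 * real (card K)))"
    using A_le[of 1] A_le[of "-1"] by simp
  finally show ?thesis .
qed

section \<open>The deterministic bound on a single pair\<close>

lemma abs_sqrt_remainder_le:
  fixes w s q :: real
  assumes w: "0 \<le> w" and ww: "w\<^sup>2 = 1 + s + q"
  shows "\<bar>1 - w + s*w/2\<bar> \<le> \<bar>s\<bar>*\<bar>w - 1\<bar> + \<bar>q\<bar>"
proof -
  have eq: "(1 - w + s*w/2)*(1 + w) = s*(w - 1)*((w + 2)/2) - q"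
    using ww by (simp add: power2_eq_square algebra_simps)
  have "\<bar>1 - w + s*w/2\<bar>*(1 + w) = \<bar>s*(w - 1)*((w + 2)/2) - q\<bar>"
    unfolding eq[symmetric] using w by (simp add: abs_mult)
  also have "\<dots> \<le> \<bar>s\<bar>*\<bar>w - 1\<bar>*((w + 2)/2) + \<bar>q\<bar>"
    using w abs_triangle_ineq4[of "s*(w - 1)*((w + 2)/2)" q] by (simp add: abs_mult)
  also have "\<dots> \<le> (\<bar>s\<bar>*\<bar>w - 1\<bar> + \<bar>q\<bar>)*(1 + w)"
    using w by (simp add: algebra_simps mult_left_mono)
  finally have "\<bar>1 - w + s*w/2\<bar>*(1 + w) \<le> (\<bar>s\<bar>*\<bar>w - 1\<bar> + \<bar>q\<bar>)*(1 + w)" .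
  thus ?thesis
    using w by (simp add: mult_le_cancel_right_pos add_nonneg_pos)
qed

lemma abs_sqrt_remainder_le_quadratic:
  fixes w s q d :: real
  assumes w: "0 \<le> w" and ww: "w\<^sup>2 = 1 + s + q" and s: "\<bar>s\<bar> \<le> 2*d" and q: "\<bar>q\<bar> \<le> d\<^sup>2"
    and d: "0 \<le> d" "d \<le> 1/2"
  shows "\<bar>1 - w + s*w/2\<bar> \<le> 7*d\<^sup>2"
proof -
  have "\<bar>w - 1\<bar>*(w + 1) = \<bar>s + q\<bar>"
  proof -
    have "(w - 1)*(w + 1) = s + q" using ww by (simp add: power2_eq_square algebra_simps)
    thus ?thesis using w by (metis abs_mult abs_of_nonneg add_nonneg_nonneg zero_le_one)
  qed
  moreover have "\<bar>w - 1\<bar> \<le> \<bar>w - 1\<bar>*(w + 1)" using w by (simp add: mult_le_cancel_left1)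
  ultimately have "\<bar>w - 1\<bar> \<le> 2*d + d\<^sup>2" using s q by linarith
  hence "\<bar>s\<bar>*\<bar>w - 1\<bar> \<le> (2*d)*(2*d + d\<^sup>2)"
    using s by (intro mult_mono) auto
  moreover have "d*d\<^sup>2 \<le> 1*d\<^sup>2" using d by (intro mult_right_mono) auto
  hence "(2*d)*(2*d + d\<^sup>2) \<le> 6*d\<^sup>2" by (simp add: power2_eq_square algebra_simps)
  ultimately show ?thesis
    using abs_sqrt_remainder_le[OF w ww] q by linarith
qed

lemma epsn_eq:
  assumes "n > 0" and "Lstat n X i > - real n"
  shows "epsn n X i = 1 / sqrt (1 + Lstat n X i / n) - 1 + Lstat n X i / (2 * real n)"
proof -
  have "1 + Lstat n X i / n > 0" using assms by (simp add: field_simps)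
  thus ?thesis by (simp add: epsn_def powr_minus_divide powr_half_sqrt[symmetric] powr_minus)
qed

lemma Estat_eq:
  assumes n: "n > 0" and "Lstat n X i > - real n" and "Lstat n X j > - real n"
  shows "Estat n X i j
           = 1 / sqrt ((1 + Lstat n X i / n) * (1 + Lstat n X j / n)) - 1
             + (Lstat n X i + Lstat n X j) / (2 * real n)"
proof -
  define ri where "ri = 1 / sqrt (1 + Lstat n X i / n)"
  define rj where "rj = 1 / sqrt (1 + Lstat n X j / n)"
  have "1 / sqrt ((1 + Lstat n X i / n) * (1 + Lstat n X j / n)) = ri * rj"
    by (simp add: ri_def rj_def real_sqrt_mult)
  moreover have "Estat n X i j = ri * rj - 1 + (Lstat n X i + Lstat n X j) / (2 * real n)"
    using n unfolding Estat_def epsn_eq[OF assms(1,2)] epsn_eq[OF assms(1,3)]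
      ri_def[symmetric] rj_def[symmetric]
    by (simp add: field_simps power2_eq_square)
  ultimately show ?thesis by simp
qed

lemma abs_sum_mult_le_sqrt:
  fixes a b :: "'a \<Rightarrow> real"
  shows "\<bar>\<Sum>k\<in>K. a k * b k\<bar> \<le> sqrt ((\<Sum>k\<in>K. (a k)\<^sup>2) * (\<Sum>k\<in>K. (b k)\<^sup>2))"
  using real_sqrt_le_mono[OF Cauchy_Schwarz_ineq_sum[of a b K]] by simp

lemma sum_sq_eq_Lstat: "(\<Sum>k=1..n. (X k i)\<^sup>2) = real n + Lstat n X i"
  by (simp add: Lstat_def)

lemma Estat_mult_inner_le:
  assumes n: "n > 0" and d: "0 \<le> d" "d \<le> 1/2"
    and Li: "\<bar>Lstat n X i\<bar> \<le> d * n" and Lj: "\<bar>Lstat n X j\<bar> \<le> d * n"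
  shows "\<bar>Estat n X i j\<bar> * \<bar>(1 / sqrt (real n)) * (\<Sum>k=1..n. X k i * X k j)\<bar> \<le> 7 * d\<^sup>2 * sqrt n"
proof -
  define ti where "ti = Lstat n X i / n"
  define tj where "tj = Lstat n X j / n"
  have ti: "\<bar>ti\<bar> \<le> d" and tj: "\<bar>tj\<bar> \<le> d"
    using Li Lj n by (simp_all add: ti_def tj_def abs_divide divide_le_eq)
  hence pos: "1 + ti > 0" "1 + tj > 0" using d by auto
  define w where "w = sqrt ((1 + ti) * (1 + tj))"
  have w: "w > 0" using pos by (simp add: w_def)
  have "Estat n X i j = 1 / w - 1 + (ti + tj) / 2"
    using Estat_eq[of n X i j] pos n by (simp add: w_def ti_def tj_def field_simps)
  hence "Estat n X i j * w = 1 - w + (ti + tj) * w / 2"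
    using w by (simp add: field_simps)
  hence "\<bar>Estat n X i j\<bar> * w = \<bar>1 - w + (ti + tj) * w / 2\<bar>"
    using w by (metis abs_mult abs_of_pos)
  also have "\<dots> \<le> 7 * d\<^sup>2"
  proof (rule abs_sqrt_remainder_le_quadratic[OF _ _ _ _ d])
    have "w\<^sup>2 = (1 + ti) * (1 + tj)" using pos by (simp add: w_def)
    thus "w\<^sup>2 = 1 + (ti + tj) + ti * tj" by (simp add: algebra_simps)
    show "\<bar>ti * tj\<bar> \<le> d\<^sup>2"
      using ti tj by (simp add: abs_mult power2_eq_square mult_mono)
  qed (use w ti tj in auto)
  finally have E: "\<bar>Estat n X i j\<bar> * w \<le> 7 * d\<^sup>2" .
  have "\<bar>\<Sum>k=1..n. X k i * X k j\<bar> \<le> sqrt ((n + Lstat n X i) * (n + Lstat n X j))"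
    using abs_sum_mult_le_sqrt[of "\<lambda>k. X k i" "\<lambda>k. X k j" "{1..n}"]
    unfolding sum_sq_eq_Lstat .
  also have "(n + Lstat n X i) * (n + Lstat n X j) = (real n)\<^sup>2 * ((1 + ti) * (1 + tj))"
    using n by (simp add: ti_def tj_def field_simps power2_eq_square)
  also have "sqrt \<dots> = n * w" by (simp add: w_def real_sqrt_mult)
  finally have S: "\<bar>\<Sum>k=1..n. X k i * X k j\<bar> \<le> n * w" .
  have "\<bar>Estat n X i j\<bar> * \<bar>(1 / sqrt (real n)) * (\<Sum>k=1..n. X k i * X k j)\<bar>
      \<le> \<bar>Estat n X i j\<bar> * (n * w) / sqrt n"
    using S by (simp add: abs_mult divide_right_mono mult_left_mono)
  also have "\<dots> = (\<bar>Estat n X i j\<bar> * w) * sqrt n"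
    using n by (simp add: field_simps real_sqrt_mult[symmetric])
  also have "\<dots> \<le> 7 * d\<^sup>2 * sqrt n"
    using E by (simp add: mult_right_mono)
  finally show ?thesis .
qed

section \<open>The maximum over all pairs\<close>

definition pair_stat_max :: "nat \<Rightarrow> nat \<Rightarrow> (nat \<Rightarrow> nat \<Rightarrow> real) \<Rightarrow> real" where
  "pair_stat_max n m X = Max (insert 0 {\<bar>Estat n X i j\<bar> * \<bar>(1 / sqrt (real n)) * (\<Sum>k=1..n. X k i * X k j)\<bar> |
                                        i j. 1 \<le> i \<and> i < j \<and> j \<le> m})"

lemma finite_ordered_pairs_image: "finite {f i j |i j. 1 \<le> i \<and> i < j \<and> j \<le> (m::nat)}"
  by (rule finite_subset[of _ "(\<lambda>(i, j). f i j) ` ({1..m} \<times> {1..m})"]) auto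

lemma pair_stat_max_nonneg: "0 \<le> pair_stat_max n m X"
  unfolding pair_stat_max_def using finite_ordered_pairs_image by (intro Max_ge) auto

lemma pair_stat_max_le:
  assumes "n > 0" "0 \<le> d" "d \<le> 1/2" and "\<And>i. i \<in> {1..m} \<Longrightarrow> \<bar>Lstat n X i\<bar> \<le> d * n"
  shows "pair_stat_max n m X \<le> 7 * d\<^sup>2 * sqrt n"
proof -
  have "\<bar>Estat n X i j\<bar> * \<bar>(1 / sqrt (real n)) * (\<Sum>k=1..n. X k i * X k j)\<bar> \<le> 7 * d\<^sup>2 * sqrt n"
    if "1 \<le> i" "i < j" "j \<le> m" for i j
    using Estat_mult_inner_le[OF assms(1-3)] assms(4) that by simp
  thus ?thesis
    unfolding pair_stat_max_def using assms(2) finite_ordered_pairs_image by (subst Max_le_iff) auto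
qed

lemma (in prob_space) prob_pair_stat_max_gt_le:
  fixes x :: "nat \<Rightarrow> nat \<Rightarrow> 'a \<Rightarrow> real"
  assumes n: "n > 0" and d: "0 \<le> d" "d \<le> 1/2"
    and meas: "\<And>i. i \<in> {1..m} \<Longrightarrow> (\<lambda>\<omega>. Lstat n (\<lambda>k i. x k i \<omega>) i) \<in> borel_measurable M"
    and tail: "\<And>i. i \<in> {1..m} \<Longrightarrow>
                 prob {\<omega>\<in>space M. d * n \<le> \<bar>Lstat n (\<lambda>k i. x k i \<omega>) i\<bar>} \<le> \<delta>"
  shows "prob {\<omega>\<in>space M. 7 * d\<^sup>2 * sqrt n < pair_stat_max n m (\<lambda>k i. x k i \<omega>)} \<le> m * \<delta>"
proof -
  define B where "B i = {\<omega>\<in>space M. d * n \<le> \<bar>Lstat n (\<lambda>k i. x k i \<omega>) i\<bar>}" for i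
  have B_sets: "B i \<in> sets M" if "i \<in> {1..m}" for i
    unfolding B_def using meas[OF that] by measurable
  have "{\<omega>\<in>space M. 7 * d\<^sup>2 * sqrt n < pair_stat_max n m (\<lambda>k i. x k i \<omega>)} \<subseteq> (\<Union>i\<in>{1..m}. B i)"
  proof
    fix \<omega> assume \<omega>: "\<omega> \<in> {\<omega>\<in>space M. 7 * d\<^sup>2 * sqrt n < pair_stat_max n m (\<lambda>k i. x k i \<omega>)}"
    show "\<omega> \<in> (\<Union>i\<in>{1..m}. B i)"
    proof (rule ccontr)
      assume "\<omega> \<notin> (\<Union>i\<in>{1..m}. B i)"
      hence "\<bar>Lstat n (\<lambda>k i. x k i \<omega>) i\<bar> \<le> d * n" if "i \<in> {1..m}" for i
        using \<omega> that by (force simp: B_def)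
      with \<omega> show False using pair_stat_max_le[OF n d] by (simp add: not_less[symmetric])
    qed
  qed
  hence "prob {\<omega>\<in>space M. 7 * d\<^sup>2 * sqrt n < pair_stat_max n m (\<lambda>k i. x k i \<omega>)}
         \<le> prob (\<Union>i\<in>{1..m}. B i)"
    using B_sets by (intro finite_measure_mono) auto
  also have "\<dots> \<le> (\<Sum>i\<in>{1..m}. prob (B i))"
    using B_sets by (intro measure_UNION_le) auto
  also have "\<dots> \<le> m * \<delta>"
    using sum_mono[of "{1..m}" "\<lambda>i. prob (B i)" "\<lambda>_. \<delta>"] tail by (simp add: B_def)
  finally show ?thesis .
qed

lemma (in prob_space) prob_pair_stat_max_gt_log_le:
  fixes x :: "nat \<Rightarrow> nat \<Rightarrow> 'a \<Rightarrow> real" and C :: real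
  assumes n: "n > 0" and m: "m \<ge> 2" and C: "C \<ge> 224" and small: "C * (ln m / n) \<le> 7/4"
    and meas: "\<And>i. i \<in> {1..m} \<Longrightarrow> (\<lambda>\<omega>. Lstat n (\<lambda>k i. x k i \<omega>) i) \<in> borel_measurable M"
    and tail: "\<And>i s. i \<in> {1..m} \<Longrightarrow> 0 < s \<Longrightarrow> s \<le> n \<Longrightarrow>
                 prob {\<omega>\<in>space M. s \<le> \<bar>Lstat n (\<lambda>k i. x k i \<omega>) i\<bar>} \<le> 2 * exp (-s\<^sup>2 / (16 * real n))"
  shows "prob {\<omega>\<in>space M. C * (ln m / sqrt n) < pair_stat_max n m (\<lambda>k i. x k i \<omega>)} \<le> 2 / m"
proof -
  have lnm: "ln m > 0" using m by simp
  \<comment> \<open>\<open>d\<close> makes the threshold \<open>7 d\<^sup>2 \<surd>n\<close> equal to \<open>C ln m / \<surd>n\<close>; then \<open>C \<ge> 224\<close> makes each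
     coordinate's tail at most \<open>2 / m\<^sup>2\<close>.\<close>
  define d where "d = sqrt (C * (ln m / n) / 7)"
  have d2: "d\<^sup>2 = C * (ln m / n) / 7" using C lnm n by (simp add: d_def)
  have d: "0 < d" "d \<le> 1/2"
  proof -
    show "0 < d" using C lnm n by (simp add: d_def)
    have "C * (ln m / n) / 7 \<le> (7/4) / 7" using small by (intro divide_right_mono) auto
    hence "C * (ln m / n) / 7 \<le> (1/2)\<^sup>2" by (simp add: power2_eq_square)
    from real_sqrt_le_mono[OF this] show "d \<le> 1/2" by (simp add: d_def)
  qed
  have "7 * d\<^sup>2 * sqrt n = C * ln m * (sqrt n / n)"
    unfolding d2 by simp
  also have "\<dots> = C * (ln m / sqrt n)"
    using sqrt_divide_self_eq[of "real n"] by (simp add: divide_inverse)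
  finally have threshold: "7 * d\<^sup>2 * sqrt n = C * (ln m / sqrt n)" .
  have "(d * n)\<^sup>2 / (16 * real n) = d\<^sup>2 * n / 16"
    using n by (simp add: power_mult_distrib power2_eq_square[of "real n"])
  also have "\<dots> = C / 112 * ln m" using n by (simp add: d2)
  finally have "-(d * n)\<^sup>2 / (16 * real n) = - (C / 112 * ln m)" by simp
  moreover have "2 * ln m \<le> C / 112 * ln m" using C lnm by (intro mult_right_mono) auto
  ultimately have "exp (-(d * n)\<^sup>2 / (16 * real n)) \<le> exp (- (2 * ln m))" by simp
  also have "- (2 * ln m) = ln (1 / (real m)\<^sup>2)" using m by (simp add: ln_div ln_realpow)
  finally have exp_le: "exp (-(d * n)\<^sup>2 / (16 * real n)) \<le> 1 / (real m)\<^sup>2" using m by simp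
  have "prob {\<omega>\<in>space M. d * n \<le> \<bar>Lstat n (\<lambda>k i. x k i \<omega>) i\<bar>} \<le> 2 / (real m)\<^sup>2"
    if i: "i \<in> {1..m}" for i
  proof -
    have "d * n \<le> n" using d by (intro mult_left_le_one_le) auto
    hence "prob {\<omega>\<in>space M. d * n \<le> \<bar>Lstat n (\<lambda>k i. x k i \<omega>) i\<bar>} \<le> 2 * exp (-(d * n)\<^sup>2 / (16 * real n))"
      using d n by (intro tail[OF i]) auto
    thus ?thesis using exp_le by linarith
  qed
  hence "prob {\<omega>\<in>space M. 7 * d\<^sup>2 * sqrt n < pair_stat_max n m (\<lambda>k i. x k i \<omega>)} \<le> m * (2 / (real m)\<^sup>2)"
    using prob_pair_stat_max_gt_le[OF n less_imp_le[OF d(1)] d(2), of m x] meas by blast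
  also have "\<dots> = 2 / m" by (simp add: power2_eq_square)
  finally show ?thesis unfolding threshold .
qed

section \<open>Gaussian samples\<close>

lemma gaussian_vector_distr_component:
  assumes "gaussian_vector M I X S" and "finite I" and "i \<in> I"
  shows "distr M lborel (X i) = centered_normal (S i i)"
proof -
  define e where "e j = (of_bool (j = i) :: real)" for j
  have "distr M lborel (\<lambda>\<omega>. \<Sum>j\<in>I. e j * X j \<omega>) = centered_normal (\<Sum>j\<in>I. \<Sum>j'\<in>I. e j * e j' * S j j')"
    using assms(1) unfolding gaussian_vector_def by blast
  moreover have "(\<lambda>\<omega>. \<Sum>j\<in>I. e j * X j \<omega>) = X i"
    using assms(2,3) by (simp add: e_def)
  moreover have "(\<Sum>j\<in>I. \<Sum>j'\<in>I. e j * e j' * S j j') = S i i"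
  proof -
    have "(\<Sum>j\<in>I. \<Sum>j'\<in>I. e j * e j' * S j j') = (\<Sum>j\<in>I. e j * (\<Sum>j'\<in>I. e j' * S j j'))"
      by (simp add: sum_distrib_left mult.assoc)
    also have "\<dots> = S i i"
      using assms(2,3) by (simp add: e_def)
    finally show ?thesis .
  qed
  ultimately show ?thesis by simp
qed

lemma Lstat_measurable:
  assumes "\<And>k. k \<in> {1..n} \<Longrightarrow> x k i \<in> borel_measurable M"
  shows "(\<lambda>\<omega>. Lstat n (\<lambda>k i. x k i \<omega>) i) \<in> borel_measurable M"
  unfolding Lstat_def using assms by (intro borel_measurable_add borel_measurable_sum) auto

lemma (in prob_space) gaussian_sample_Lstat_tail_le:
  fixes x :: "nat \<Rightarrow> nat \<Rightarrow> 'a \<Rightarrow> real"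
  assumes i: "i \<in> {1..m}" and diag: "S i i = 1"
    and gauss: "\<And>k. k \<in> {1..n} \<Longrightarrow> gaussian_vector M {1..m} (\<lambda>i. x k i) S"
    and indep: "indep_vars (\<lambda>k. PiM {1..m} (\<lambda>_. borel)) (\<lambda>k \<omega>. \<lambda>i\<in>{1..m}. x k i \<omega>) {1..n}"
    and s: "0 < s" "s \<le> n"
  shows "prob {\<omega>\<in>space M. s \<le> \<bar>Lstat n (\<lambda>k i. x k i \<omega>) i\<bar>} \<le> 2 * exp (-s\<^sup>2 / (16 * n))"
proof -
  have "indep_vars (\<lambda>_. borel) (\<lambda>k \<omega>. (\<lambda>f. f i) (\<lambda>i\<in>{1..m}. x k i \<omega>)) {1..n}"
    using i by (intro indep_vars_compose2[OF indep]) simp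
  hence "indep_vars (\<lambda>_. borel) (\<lambda>k \<omega>. x k i \<omega>) {1..n}"
    using i by simp
  moreover have "distr M lborel (x k i) = std_normal_distribution" if "k \<in> {1..n}" for k
    using gaussian_vector_distr_component[OF gauss[OF that] _ i] diag by (simp add: centered_normal_def)
  ultimately show ?thesis
    using chi_square_tail_le[of "{1..n}" "\<lambda>k \<omega>. x k i \<omega>" s] s
    by (simp add: Lstat_def sum_subtractf)
qed

lemma bigOP_if_tail_le:
  fixes u :: "nat \<Rightarrow> real"
  assumes tail: "\<And>C. C \<ge> C\<^sub>0 \<Longrightarrow>
                  eventually (\<lambda>n. measure (M n) {\<omega>\<in>space (M n). \<bar>\<xi> n \<omega> / a n\<bar> > C} \<le> u n) sequentially"
    and u: "u \<longlonglongrightarrow> 0"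
  shows "bigOP M \<xi> a"
proof -
  have limsup_0: "limsup (\<lambda>n. ereal (measure (M n) {\<omega>\<in>space (M n). \<bar>\<xi> n \<omega> / a n\<bar> > C})) = 0"
    if C: "C \<ge> C\<^sub>0" for C
  proof -
    have "(\<lambda>n. ereal (measure (M n) {\<omega>\<in>space (M n). \<bar>\<xi> n \<omega> / a n\<bar> > C})) \<longlonglongrightarrow> 0"
    proof (rule tendsto_sandwich[OF _ _ tendsto_const])
      show "(\<lambda>n. ereal (u n)) \<longlonglongrightarrow> 0"
        using tendsto_ereal[OF u] by (simp add: zero_ereal_def)
      show "\<forall>\<^sub>F n in sequentially. ereal (measure (M n) {\<omega>\<in>space (M n). \<bar>\<xi> n \<omega> / a n\<bar> > C}) \<le> ereal (u n)"
        using tail[OF C] by (rule eventually_mono) simp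
    qed simp
    thus ?thesis by (rule lim_imp_Limsup[rotated]) simp
  qed
  have "eventually (\<lambda>C. limsup (\<lambda>n. ereal (measure (M n) {\<omega>\<in>space (M n). \<bar>\<xi> n \<omega> / a n\<bar> > C})) = 0) at_top"
    using eventually_ge_at_top[of C\<^sub>0] by (rule eventually_mono) (rule limsup_0)
  thus ?thesis unfolding bigOP_def by (rule tendsto_eventually)
qed

theorem lemma3:
  fixes M :: "nat \<Rightarrow> 'a measure"
    and p :: "nat \<Rightarrow> nat"
    and \<Sigma> :: "nat \<Rightarrow> nat \<Rightarrow> nat \<Rightarrow> real"
    and x :: "nat \<Rightarrow> nat \<Rightarrow> nat \<Rightarrow> 'a \<Rightarrow> real"
  assumes prob: "\<And>n. prob_space (M n)"
    and diag: "\<And>n i. i \<in> {1..p n} \<Longrightarrow> \<Sigma> n i i = 1"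
    and gauss: "\<And>n k. k \<in> {1..n} \<Longrightarrow> gaussian_vector (M n) {1..p n} (\<lambda>i. x n k i) (\<Sigma> n)"
    and indep: "\<And>n. prob_space.indep_vars (M n) (\<lambda>k. PiM {1..p n} (\<lambda>_. borel))
                   (\<lambda>k \<omega>. \<lambda>i\<in>{1..p n}. x n k i \<omega>) {1..n}"
    and p_inf: "filterlim p at_top sequentially"
    and logp: "(\<lambda>n. ln (real (p n)) / real n) \<longlonglongrightarrow> 0"
  shows "bigOP M
           (\<lambda>n \<omega>. Max (insert 0 {\<bar>Estat n (\<lambda>k i. x n k i \<omega>) i j\<bar> *
                       \<bar>(1 / sqrt (real n)) * (\<Sum>k=1..n. x n k i \<omega> * x n k j \<omega>)\<bar> |
                     i j. 1 \<le> i \<and> i < j \<and> j \<le> p n}))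
           (\<lambda>n. ln (real (p n)) / sqrt (real n))"
proof -
  have tail: "eventually (\<lambda>n. measure (M n)
                 {\<omega>\<in>space (M n). \<bar>pair_stat_max n (p n) (\<lambda>k i. x n k i \<omega>) / (ln (p n) / sqrt n)\<bar> > C}
               \<le> 2 / p n) sequentially" if C: "C \<ge> 224" for C
  proof -
    have "(\<lambda>n. C * (ln (p n) / n)) \<longlonglongrightarrow> C * 0" by (intro tendsto_mult tendsto_const logp)
    hence "eventually (\<lambda>n. C * (ln (p n) / n) < 7/4) sequentially" by (intro order_tendstoD(2)) auto
    moreover have "eventually (\<lambda>n. 2 \<le> p n) sequentially" using p_inf by (simp add: filterlim_at_top)
    ultimately show ?thesis using eventually_gt_at_top[of 0]
    proof eventually_elim
      case (elim n)
      interpret prob_space "M n" by (rule prob)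
      have "\<bar>pair_stat_max n (p n) X / (ln (p n) / sqrt n)\<bar> > C \<longleftrightarrow>
            C * (ln (p n) / sqrt n) < pair_stat_max n (p n) X" for X
        using elim pair_stat_max_nonneg[of n "p n" X] by (simp add: pos_less_divide_eq pos_divide_less_eq)
      moreover have "(\<lambda>\<omega>. Lstat n (\<lambda>k i. x n k i \<omega>) i) \<in> borel_measurable (M n)" if "i \<in> {1..p n}" for i
        using gauss that by (intro Lstat_measurable) (simp add: gaussian_vector_def)
      ultimately show ?case
        using prob_pair_stat_max_gt_log_le[OF _ _ C, of n "p n" "x n"]
          gaussian_sample_Lstat_tail_le[OF _ diag gauss indep] elim by simp
    qed
  qed
  have "(\<lambda>n. 2 / real (p n)) \<longlonglongrightarrow> 0"
    using filterlim_compose[OF filterlim_real_sequentially p_inf]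
    by (intro tendsto_divide_0[OF tendsto_const] filterlim_at_top_imp_at_infinity)
  from bigOP_if_tail_le[OF tail this] show ?thesis by (simp add: pair_stat_max_def)
qed

end
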